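(* Let $A$ be a quasi implicative ordered combinatory algebra, and for $a,b\in A$ put $a\,\sharp\,b=\inf\{c\in A: a\le (b\to c)\}$. Then: (1) for all $a,b\in A$, $ab\le a\,\sharp\,b$; (2) if $A$ is an implicative ordered combinatory algebra with adjunctor $\mathsf e$, then for all $a,b\in A$, $(\mathsf e\, a)\,\sharp\, b\le ab$; (3) if $A$ is a full adjunction implicative ordered combinatory algebra, then for all $a,b\in A$, $a\,\sharp\,b=ab$.
   Context: A quasi implicative ordered combinatory algebra consists of an inf-complete partially ordered set $(A,\le)$ with a binary operation (application) $(a,b)\mapsto ab$, monotone in both arguments (associating to the left), a binary operation (implication) $(a,b)\mapsto a\to b$, antimonotone in the first and monotone in the second argument, elements $\mathsf s,\mathsf k\in A$ such that for all $a,b,c\in A$: $\mathsf k ab\le a$; $\mathsf s abc\le ac(bc)$; and (PA) if $a\le b\to c$ then $ab\le c$; together with a subset $\Phi\subseteq A$ (filter) closed under application containing $\mathsf s,\mathsf k$. It is an implicative ordered combinatory algebra (with adjunctor $\mathsf e$) if moreover there is $\mathsf e\in\Phi$ such that $ab\le c$ implies $\mathsf e a\le b\to c$. It is a full adjunction implicative ordered combinatory algebra if for all $a,b,c$, $ab\le c$ implies $a\le b\to c$. *)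

theory Defs
  imports Main
begin

text \<open>An inf-complete partial order is a complete lattice; we use the type class
complete_lattice as carrier. Application is app, implication is imp.\<close>

definition quasi_ioca ::
  "('a::complete_lattice \<Rightarrow> 'a \<Rightarrow> 'a) \<Rightarrow> ('a \<Rightarrow> 'a \<Rightarrow> 'a) \<Rightarrow> 'a \<Rightarrow> 'a \<Rightarrow> 'a set \<Rightarrow> bool"
where
  "quasi_ioca app imp s k Phi \<longleftrightarrow>
     (\<forall>a a' b b'. a \<le> a' \<longrightarrow> b \<le> b' \<longrightarrow> app a b \<le> app a' b') \<and>
     (\<forall>a a' b b'. a' \<le> a \<longrightarrow> b \<le> b' \<longrightarrow> imp a b \<le> imp a' b') \<and>
     (\<forall>a b. app (app k a) b \<le> a) \<and>
     (\<forall>a b c. app (app (app s a) b) c \<le> app (app a c) (app b c)) \<and>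
     (\<forall>a b c. a \<le> imp b c \<longrightarrow> app a b \<le> c) \<and>
     (\<forall>a\<in>Phi. \<forall>b\<in>Phi. app a b \<in> Phi) \<and> s \<in> Phi \<and> k \<in> Phi"

definition ioca ::
  "('a::complete_lattice \<Rightarrow> 'a \<Rightarrow> 'a) \<Rightarrow> ('a \<Rightarrow> 'a \<Rightarrow> 'a) \<Rightarrow> 'a \<Rightarrow> 'a \<Rightarrow> 'a set \<Rightarrow> 'a \<Rightarrow> bool"
where
  "ioca app imp s k Phi e \<longleftrightarrow> quasi_ioca app imp s k Phi \<and> e \<in> Phi \<and>
     (\<forall>a b c. app a b \<le> c \<longrightarrow> app e a \<le> imp b c)"

definition full_ioca ::
  "('a::complete_lattice \<Rightarrow> 'a \<Rightarrow> 'a) \<Rightarrow> ('a \<Rightarrow> 'a \<Rightarrow> 'a) \<Rightarrow> 'a \<Rightarrow> 'a \<Rightarrow> 'a set \<Rightarrow> bool"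
where
  "full_ioca app imp s k Phi \<longleftrightarrow> quasi_ioca app imp s k Phi \<and>
     (\<forall>a b c. app a b \<le> c \<longrightarrow> a \<le> imp b c)"

definition sharp :: "('a::complete_lattice \<Rightarrow> 'a \<Rightarrow> 'a) \<Rightarrow> 'a \<Rightarrow> 'a \<Rightarrow> 'a" where
  "sharp imp a b = Inf {c. a \<le> imp b c}"

end

theory Submission
  imports Defs
begin

lemma sharp_le_of_le_imp:
  fixes imp :: "'a::complete_lattice \<Rightarrow> 'a \<Rightarrow> 'a"
  assumes "a \<le> imp b c"
  shows "sharp imp a b \<le> c"
  unfolding sharp_def using assms by (intro Inf_lower) simp

lemma app_le_sharp:
  fixes app imp :: "'a::complete_lattice \<Rightarrow> 'a \<Rightarrow> 'a"
  assumes PA: "\<And>a b c. a \<le> imp b c \<Longrightarrow> app a b \<le> c"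
  shows "app a b \<le> sharp imp a b"
  unfolding sharp_def by (rule Inf_greatest) (auto intro: PA)

lemma sharp_app_adjunctor_le:
  assumes "ioca app imp s k Phi e"
  shows "sharp imp (app e a) b \<le> app a b"
proof (rule sharp_le_of_le_imp)
  show "app e a \<le> imp b (app a b)"
    using assms unfolding ioca_def by blast
qed

lemma sharp_eq_app_if_full:
  assumes "full_ioca app imp s k Phi"
  shows "sharp imp a b = app a b"
proof (rule antisym)
  have "a \<le> imp b (app a b)"
    using assms unfolding full_ioca_def by blast
  then show "sharp imp a b \<le> app a b"
    by (rule sharp_le_of_le_imp)
  have "\<And>a b c. a \<le> imp b c \<Longrightarrow> app a b \<le> c"
    using assms unfolding full_ioca_def quasi_ioca_def by blast
  then show "app a b \<le> sharp imp a b"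
    by (rule app_le_sharp)
qed

theorem mainTheorem1:
  fixes app imp :: "'a::complete_lattice \<Rightarrow> 'a \<Rightarrow> 'a" and s k :: 'a and Phi :: "'a set"
  assumes "quasi_ioca app imp s k Phi"
  shows "(\<forall>a b. app a b \<le> sharp imp a b)
    \<and> (\<forall>e. ioca app imp s k Phi e \<longrightarrow> (\<forall>a b. sharp imp (app e a) b \<le> app a b))
    \<and> (full_ioca app imp s k Phi \<longrightarrow> (\<forall>a b. sharp imp a b = app a b))"
proof (intro conjI allI impI)
  fix a b
  have "\<And>a b c. a \<le> imp b c \<Longrightarrow> app a b \<le> c"
    using assms unfolding quasi_ioca_def by blast
  then show "app a b \<le> sharp imp a b"
    by (rule app_le_sharp)
next
  fix e a b
  assume "ioca app imp s k Phi e"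
  then show "sharp imp (app e a) b \<le> app a b"
    by (rule sharp_app_adjunctor_le)
next
  fix a b
  assume "full_ioca app imp s k Phi"
  then show "sharp imp a b = app a b"
    by (rule sharp_eq_app_if_full)
qed

end
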